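(* Let $(M,\mu)$, $(N,\nu)$ be non-atomic measure spaces with $\mu(M)=\nu(N)=1$, let $1\le q<p\le\infty$, $\alpha=1/q-1/p$, and $0<t\le1$. For measurable $a$ on $M\times N$ define $$|||a|||_{p,q,t}=\sup_{E,F}\big(\mu(E)^{\alpha}\vee t^{-1}\nu(F)^{\alpha}\big)^{-1}\|1_{E\times F}\,a\|_{L^q(M\times N)},$$ over measurable $E\subset M$, $F\subset N$ of positive measure, and $$\|\!|\!|a|\!|\!\|_{p,q,t}=\sup\big\{\mu(E)^{-\alpha}\|1_{E\times F}\,a\|_{L^q(M\times N)}:\ t^{-1}\nu(F)^{\alpha}\le\mu(E)^{\alpha}\big\}$$ (over measurable $E,F$ with $\mu(E)>0$; equal to $0$ if there are none). Then $$\sup_{a}\frac{|||a|||_{p,q,t}}{\|\!|\!|a|\!|\!\|_{p,q,t}}=t^{-q/(p-q)},$$ the supremum taken over $a\in L^1(M\times N)$ for which the quotient is defined, i.e. $0<\|\!|\!|a|\!|\!\|_{p,q,t}<\infty$ (with $t^{-q/(p-q)}=1$ when $p=\infty$).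
   Context: $1_S$ is the indicator of $S$; $u\vee v=\max(u,v)$. Measures on $M\times N$ are the product measure $\mu\times\nu$. *)

theory Defs
  imports "HOL-Analysis.Analysis"
begin

definition nonatomic :: "'a measure \<Rightarrow> bool" where
  "nonatomic M \<longleftrightarrow> (\<forall>A\<in>sets M. 0 < emeasure M A \<longrightarrow>
     (\<exists>B\<in>sets M. B \<subseteq> A \<and> 0 < emeasure M B \<and> emeasure M B < emeasure M A))"

definition ennroot :: "real \<Rightarrow> ennreal \<Rightarrow> ennreal" where
  "ennroot q x = (if x = \<infinity> then \<infinity> else ennreal (enn2real x powr (1 / q)))"

definition Lq_norm :: "'a measure \<Rightarrow> real \<Rightarrow> ('a \<Rightarrow> real) \<Rightarrow> ennreal" where
  "Lq_norm M q f = ennroot q (\<integral>\<^sup>+ x. ennreal (\<bar>f x\<bar> powr q) \<partial>M)"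

definition alpha_exp :: "real \<Rightarrow> ereal \<Rightarrow> real" where
  "alpha_exp q p = 1 / q - (if p = \<infinity> then 0 else 1 / real_of_ereal p)"

definition norm1 :: "'a measure \<Rightarrow> 'b measure \<Rightarrow> ereal \<Rightarrow> real \<Rightarrow> real
    \<Rightarrow> ('a \<times> 'b \<Rightarrow> real) \<Rightarrow> ennreal" where
  "norm1 M N p q t a =
     (SUP EF \<in> {(E, F). E \<in> sets M \<and> F \<in> sets N \<and> measure M E > 0 \<and> measure N F > 0}.
        ennreal (1 / max (measure M (fst EF) powr alpha_exp q p)
                         (measure N (snd EF) powr alpha_exp q p / t))
        * Lq_norm (M \<Otimes>\<^sub>M N) q (\<lambda>x. indicator (fst EF \<times> snd EF) x * a x))"

definition norm2 :: "'a measure \<Rightarrow> 'b measure \<Rightarrow> ereal \<Rightarrow> real \<Rightarrow> real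
    \<Rightarrow> ('a \<times> 'b \<Rightarrow> real) \<Rightarrow> ennreal" where
  "norm2 M N p q t a =
     (SUP EF \<in> {(E, F). E \<in> sets M \<and> F \<in> sets N \<and> measure M E > 0 \<and>
                        measure N F powr alpha_exp q p / t \<le> measure M E powr alpha_exp q p}.
        ennreal (measure M (fst EF) powr (- alpha_exp q p))
        * Lq_norm (M \<Otimes>\<^sub>M N) q (\<lambda>x. indicator (fst EF \<times> snd EF) x * a x))"

end

theory Submission
  imports Defs "HOL-Probability.Probability_Measure"
begin

text \<open>
  Write alpha for alpha_exp q p and C = t powr (1 - 1/(alpha q)) = t powr (-q/(p-q)) >= 1. Call
  E x F admissible if nu(F) powr alpha / t <= mu(E) powr alpha; the second norm bounds the L^q norm
  of a on an admissible rectangle by mu(E) powr alpha times norm2 a. For an arbitrary rectangle put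
  b = nu(F) powr alpha / t. If b <= 1, nonatomicity of mu lets us enlarge E until the rectangle is
  admissible with mu(E) powr alpha = max (mu(E) powr alpha) b. If b > 1, integrate |a|^q over
  space M x F first in x (Tonelli): by nonatomicity of nu some A in F of measure s = t powr (1/alpha)
  carries at least the average mass, and the strip space M x A is admissible, so the mass over
  space M x F is at most nu(F)/s times (norm2 a)^q, and nu(F)/s <= (C b)^q. Hence norm1 <= C norm2.
  The constant function 1 attains C: its norm2 is at most t powr (1/(alpha q)), its norm1 at least t.
\<close>

context finite_measure
begin

lemma nonatomic_subset_le_half:
  assumes "nonatomic M" "A \<in> sets M" "0 < measure M A"
  obtains B where "B \<in> sets M" "B \<subseteq> A" "0 < measure M B" "measure M B \<le> measure M A / 2"
proof -
  obtain B where B: "B \<in> sets M" "B \<subseteq> A" "0 < emeasure M B" "emeasure M B < emeasure M A"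
    using assms unfolding nonatomic_def by (auto simp: emeasure_eq_measure)
  then have "0 < measure M B" "measure M B < measure M A"
    by (auto simp: emeasure_eq_measure ennreal_less_iff)
  moreover have "measure M (A - B) = measure M A - measure M B"
    using B assms by (simp add: finite_measure_Diff)
  ultimately show ?thesis
    using that[of B] that[of "A - B"] B assms(2) by (cases "measure M B \<le> measure M A / 2") auto
qed

lemma nonatomic_subset_measure_less:
  assumes "nonatomic M" "A \<in> sets M" "0 < measure M A" "0 < e"
  obtains B where "B \<in> sets M" "B \<subseteq> A" "0 < measure M B" "measure M B < e"
proof -
  have "\<exists>B\<in>sets M. B \<subseteq> A \<and> 0 < measure M B \<and> measure M B * 2 ^ n \<le> measure M A" for n
  proof (induction n)
    case (Suc n)
    then obtain B where B: "B \<in> sets M" "B \<subseteq> A" "0 < measure M B" "measure M B * 2 ^ n \<le> measure M A"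
      by blast
    then obtain C where C: "C \<in> sets M" "C \<subseteq> B" "0 < measure M C" "measure M C \<le> measure M B / 2"
      using nonatomic_subset_le_half[OF assms(1)] by metis
    have "measure M C * 2 ^ Suc n \<le> measure M B * 2 ^ n"
      using C(4) by simp
    then have "measure M C * 2 ^ Suc n \<le> measure M A"
      using B(4) by linarith
    with B C show ?case
      by blast
  qed (use assms in auto)
  moreover obtain n where "measure M A / e < 2 ^ n"
    using real_arch_pow[of 2 "measure M A / e"] by auto
  then have "measure M A < e * 2 ^ n"
    using assms by (simp add: field_simps)
  ultimately obtain B where "B \<in> sets M" "B \<subseteq> A" "0 < measure M B" "measure M B * 2 ^ n < e * 2 ^ n"
    by (meson le_less_trans)
  then show ?thesis
    using that by simp
qed

lemma extension_gaining_half_sup: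
  assumes "A \<in> sets M" "B \<in> sets M" "B \<subseteq> A" "measure M B \<le> c"
  obtains B' where "B' \<in> sets M" "B \<subseteq> B'" "B' \<subseteq> A" "measure M B' \<le> c"
    "\<And>D. D \<in> sets M \<Longrightarrow> D \<subseteq> A - B \<Longrightarrow> measure M B + measure M D \<le> c \<Longrightarrow>
       measure M D \<le> 2 * (measure M B' - measure M B)"
proof -
  define S where "S = {measure M D |D. D \<in> sets M \<and> D \<subseteq> A - B \<and> measure M B + measure M D \<le> c}"
  have "0 \<in> S"
    using assms unfolding S_def by (auto intro!: exI[of _ "{}"])
  have bdd: "bdd_above S"
    unfolding S_def by (rule bdd_aboveI[of _ "measure M (space M)"]) (auto intro: bounded_measure)
  have "\<exists>x\<in>S. Sup S / 2 \<le> x"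
  proof (cases "Sup S = 0")
    case False
    then have "Sup S / 2 < Sup S"
      using cSup_upper[OF \<open>0 \<in> S\<close> bdd] by auto
    then obtain x where "x \<in> S" "Sup S / 2 < x"
      using less_cSup_iff[OF _ bdd] \<open>0 \<in> S\<close> by blast
    then show ?thesis
      by (auto intro: less_imp_le)
  qed (use \<open>0 \<in> S\<close> in auto)
  then obtain D0 where D0: "D0 \<in> sets M" "D0 \<subseteq> A - B" "measure M B + measure M D0 \<le> c"
    "Sup S / 2 \<le> measure M D0"
    unfolding S_def by blast
  have measure_Un: "measure M (B \<union> D0) = measure M B + measure M D0"
    using D0 assms by (intro finite_measure_Union) auto
  have le_Sup: "measure M D \<le> Sup S" if "D \<in> sets M" "D \<subseteq> A - B" "measure M B + measure M D \<le> c" for D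
    using that by (intro cSup_upper[OF _ bdd]) (auto simp: S_def)
  show ?thesis
  proof (rule that[of "B \<union> D0"])
    fix D assume "D \<in> sets M" "D \<subseteq> A - B" "measure M B + measure M D \<le> c"
    then have "measure M D \<le> Sup S"
      by (rule le_Sup)
    then show "measure M D \<le> 2 * (measure M (B \<union> D0) - measure M B)"
      using D0(4) by (simp add: measure_Un)
  qed (use D0 assms measure_Un in auto)
qed

lemma greedy_chain_gaining_half:
  assumes A: "A \<in> sets M" and c: "0 \<le> c"
  obtains Bs where "incseq Bs" "\<And>n. Bs n \<in> sets M" "\<And>n. Bs n \<subseteq> A" "\<And>n. measure M (Bs n) \<le> c"
    "\<And>n D. D \<in> sets M \<Longrightarrow> D \<subseteq> A - Bs n \<Longrightarrow> measure M (Bs n) + measure M D \<le> c \<Longrightarrow>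
       measure M D \<le> 2 * (measure M (Bs (Suc n)) - measure M (Bs n))"
proof -
  define good where "good B \<longleftrightarrow> B \<in> sets M \<and> B \<subseteq> A \<and> measure M B \<le> c" for B
  define gains where "gains B B' \<longleftrightarrow> (\<forall>D\<in>sets M. D \<subseteq> A - B \<longrightarrow> measure M B + measure M D \<le> c \<longrightarrow>
      measure M D \<le> 2 * (measure M B' - measure M B))" for B B'
  have "\<exists>B'. good B' \<and> B \<subseteq> B' \<and> gains B B'" if B: "good B" for B
  proof -
    obtain B' where "B' \<in> sets M" "B \<subseteq> B'" "B' \<subseteq> A" "measure M B' \<le> c"
      "\<And>D. D \<in> sets M \<Longrightarrow> D \<subseteq> A - B \<Longrightarrow> measure M B + measure M D \<le> c \<Longrightarrow>
         measure M D \<le> 2 * (measure M B' - measure M B)"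
      by (rule extension_gaining_half_sup[OF A, of B c]) (use B in \<open>auto simp: good_def\<close>)
    then show ?thesis
      unfolding good_def gains_def by blast
  qed
  then obtain nxt where nxt: "\<And>B. good B \<Longrightarrow> good (nxt B) \<and> B \<subseteq> nxt B \<and> gains B (nxt B)"
    by metis
  define Bs where "Bs n = (nxt ^^ n) {}" for n
  have Bs_Suc: "Bs (Suc n) = nxt (Bs n)" for n
    by (simp add: Bs_def)
  have good_Bs: "good (Bs n)" for n
  proof (induction n)
    case 0
    then show ?case
      using c by (simp add: Bs_def good_def)
  next
    case (Suc n)
    then show ?case
      using nxt[OF Suc.IH] by (simp add: Bs_Suc)
  qed
  show ?thesis
  proof (rule that)
    show "incseq Bs"
      by (rule incseq_SucI) (use nxt[OF good_Bs] in \<open>simp add: Bs_Suc\<close>)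
    fix n
    show "Bs n \<in> sets M" "Bs n \<subseteq> A" "measure M (Bs n) \<le> c"
      using good_Bs[of n] by (simp_all add: good_def)
    fix D assume "D \<in> sets M" "D \<subseteq> A - Bs n" "measure M (Bs n) + measure M D \<le> c"
    then show "measure M D \<le> 2 * (measure M (Bs (Suc n)) - measure M (Bs n))"
      using nxt[OF good_Bs[of n]] unfolding gains_def Bs_Suc by blast
  qed
qed

text \<open>Sierpinski's theorem. Along the greedy chain the gains tend to zero, so a remainder of
  positive measure below c would contradict the choice of the chain.\<close>

lemma nonatomic_exists_subset_measure:
  assumes na: "nonatomic M" and A: "A \<in> sets M" and c: "0 \<le> c" "c \<le> measure M A"
  obtains B where "B \<in> sets M" "B \<subseteq> A" "measure M B = c"
proof -
  obtain Bs where Bs: "incseq Bs" "\<And>n. Bs n \<in> sets M" "\<And>n. Bs n \<subseteq> A" "\<And>n. measure M (Bs n) \<le> c"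
    and gain: "\<And>n D. D \<in> sets M \<Longrightarrow> D \<subseteq> A - Bs n \<Longrightarrow> measure M (Bs n) + measure M D \<le> c \<Longrightarrow>
       measure M D \<le> 2 * (measure M (Bs (Suc n)) - measure M (Bs n))"
    using greedy_chain_gaining_half[OF A c(1)] by blast
  define B where "B = (\<Union>n. Bs n)"
  have B: "B \<in> sets M" "B \<subseteq> A"
    using Bs by (auto simp: B_def)
  have lim: "(\<lambda>n. measure M (Bs n)) \<longlonglongrightarrow> measure M B"
    unfolding B_def using Bs by (intro finite_Lim_measure_incseq) auto
  have B_le: "measure M B \<le> c"
    by (rule LIMSEQ_le_const2[OF lim]) (use Bs(4) in auto)
  have "\<not> measure M B < c"
  proof
    assume B_less: "measure M B < c"
    have "measure M (A - B) = measure M A - measure M B"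
      using A B by (simp add: finite_measure_Diff)
    then have "0 < measure M (A - B)"
      using B_less c by linarith
    then obtain D where D: "D \<in> sets M" "D \<subseteq> A - B" "0 < measure M D" "measure M D < c - measure M B"
      by (rule nonatomic_subset_measure_less[OF na sets.Diff[OF A B(1)]]) (use B_less in auto)
    have "measure M D \<le> 2 * (measure M (Bs (Suc n)) - measure M (Bs n))" for n
    proof (rule gain)
      have "measure M (Bs n) \<le> measure M B"
        using B by (intro finite_measure_mono) (auto simp: B_def)
      then show "measure M (Bs n) + measure M D \<le> c"
        using D(4) by linarith
      show "D \<subseteq> A - Bs n"
        using D(2) by (auto simp: B_def)
    qed (rule D(1))
    moreover have "(\<lambda>n. 2 * (measure M (Bs (Suc n)) - measure M (Bs n))) \<longlonglongrightarrow> 2 * (measure M B - measure M B)"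
      by (intro tendsto_intros LIMSEQ_Suc lim)
    ultimately have "measure M D \<le> 0"
      by (intro LIMSEQ_le_const) auto
    with D(3) show False
      by simp
  qed
  with B_le have "measure M B = c"
    by linarith
  with B show ?thesis
    by (rule that)
qed

lemma nonatomic_exists_nested_subset_measure:
  assumes na: "nonatomic M" and F: "F \<in> sets M" and P: "P \<in> sets M" "P \<subseteq> F"
    and s: "0 \<le> s" "s \<le> measure M F"
  obtains A where "A \<in> sets M" "A \<subseteq> F" "measure M A = s" "A \<subseteq> P \<or> P \<subseteq> A"
proof (cases "s \<le> measure M P")
  case True
  obtain A where "A \<in> sets M" "A \<subseteq> P" "measure M A = s"
    by (rule nonatomic_exists_subset_measure[OF na P(1)]) (use s True in auto)
  with P show ?thesis
    using that by blast
next
  case False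
  have split_F: "measure M F = measure M P + measure M (F - P)"
    using F P by (simp add: finite_measure_Diff finite_measure_mono)
  obtain D where D: "D \<in> sets M" "D \<subseteq> F - P" "measure M D = s - measure M P"
    by (rule nonatomic_exists_subset_measure[OF na sets.Diff[OF F P(1)], of "s - measure M P"])
      (use False s split_F in auto)
  then have "measure M (P \<union> D) = s"
    using P by (subst finite_measure_Union) auto
  with D P show ?thesis
    using that[of "P \<union> D"] by auto
qed

lemma nonatomic_set_integral_average:
  fixes u :: "'a \<Rightarrow> real"
  assumes na: "nonatomic M" and u: "integrable M u" and F: "F \<in> sets M"
    and s: "0 < s" "s \<le> measure M F"
  obtains A where "A \<in> sets M" "A \<subseteq> F" "measure M A = s"
    "(LINT y:F|M. u y) \<le> measure M F / s * (LINT y:A|M. u y)"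
proof -
  have int: "set_integrable M S u" if "S \<in> sets M" for S
    unfolding set_integrable_def using that u by (rule integrable_mult_indicator)
  have const: "set_integrable M S (\<lambda>_. c)" "(LINT y:S|M. c) = c * measure M S" if "S \<in> sets M" for S c
    using that by (auto simp: set_integrable_def set_integral_const less_top[symmetric])
  define c where "c = (LINT y:F|M. u y) / measure M F"
  define P where "P = {y\<in>space M. c \<le> u y} \<inter> F"
  have P: "P \<in> sets M"
    unfolding P_def using F borel_measurable_integrable[OF u] by measurable
  obtain A where A: "A \<in> sets M" "A \<subseteq> F" "measure M A = s" "A \<subseteq> P \<or> P \<subseteq> A"
    by (rule nonatomic_exists_nested_subset_measure[OF na F P]) (use s in \<open>auto simp: P_def\<close>)
  have "c * s \<le> (LINT y:A|M. u y)"
    using A(4)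
  proof
    assume "A \<subseteq> P"
    then show ?thesis
      using set_integral_mono[OF const(1) int, of A c] A by (auto simp: P_def const(2))
  next
    assume "P \<subseteq> A"
    then have "u y \<le> c" if "y \<in> F - A" for y
      using that sets.sets_into_space[OF F] by (auto simp: P_def)
    then have "(LINT y:F-A|M. u y) \<le> (LINT y:F-A|M. c)"
      using A F by (intro set_integral_mono int const(1)) auto
    moreover have "(LINT y:A \<union> (F - A)|M. u y) = (LINT y:A|M. u y) + (LINT y:F-A|M. u y)"
      using A F by (intro set_integral_Un int) auto
    moreover have "A \<union> (F - A) = F"
      using A by blast
    moreover have "measure M (F - A) = measure M F - s"
      using A F by (simp add: finite_measure_Diff)
    moreover have "(LINT y:F|M. u y) = c * measure M F"
      using A F s by (auto simp: c_def)
    ultimately show ?thesis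
      using A F by (simp add: const(2) algebra_simps)
  qed
  then have "(LINT y:F|M. u y) \<le> measure M F / s * (LINT y:A|M. u y)"
    using s by (simp add: c_def field_simps)
  with A show ?thesis
    using that by blast
qed

lemma nonatomic_set_nn_integral_average:
  assumes na: "nonatomic M" and h[measurable]: "h \<in> borel_measurable M" and F[measurable]: "F \<in> sets M"
    and s: "0 < s" "s \<le> measure M F"
    and K: "\<And>A. A \<in> sets M \<Longrightarrow> A \<subseteq> F \<Longrightarrow> measure M A = s \<Longrightarrow> (\<integral>\<^sup>+y\<in>A. h y \<partial>M) \<le> K"
  shows "(\<integral>\<^sup>+y\<in>F. h y \<partial>M) \<le> ennreal (measure M F / s) * K"
proof -
  define u where "u n y = enn2real (min (h y) (of_nat n))" for n y
  have u[measurable]: "u n \<in> borel_measurable M" for n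
    unfolding u_def by measurable
  have min_u: "min (h y) (of_nat n) = ennreal (u n y)" for n y
    by (cases "h y") (auto simp: u_def min_def ennreal_of_nat_eq_real_of_nat top_unique)
  have u_nonneg: "0 \<le> u n y" for n y
    by (simp add: u_def)
  have "u n y \<le> real n" for n y
  proof -
    have "ennreal (u n y) \<le> ennreal (real n)"
      by (simp add: min_u[symmetric] ennreal_of_nat_eq_real_of_nat[symmetric])
    then show ?thesis
      by simp
  qed
  then have int_u: "integrable M (u n)" for n
    using u_nonneg by (intro integrable_const_bound[where B="real n"]) auto
  have "(\<integral>\<^sup>+y\<in>F. h y \<partial>M) = (\<integral>\<^sup>+y. (SUP n. ennreal (u n y) * indicator F y) \<partial>M)"
    by (simp add: min_u[symmetric] SUP_mult_right_ennreal[symmetric] inf_min[symmetric]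
        inf_SUP[symmetric] ennreal_SUP_of_nat_eq_top)
  also have "\<dots> = (SUP n. \<integral>\<^sup>+y\<in>F. ennreal (u n y) \<partial>M)"
    by (rule nn_integral_monotone_convergence_SUP)
      (auto simp: incseq_def le_fun_def min_u[symmetric] intro!: mult_right_mono min.mono)
  also have "\<dots> \<le> ennreal (measure M F / s) * K"
  proof (rule SUP_least)
    fix n
    obtain A where A: "A \<in> sets M" "A \<subseteq> F" "measure M A = s"
      and avg: "(LINT y:F|M. u n y) \<le> measure M F / s * (LINT y:A|M. u n y)"
      by (rule nonatomic_set_integral_average[OF na int_u F s])
    have nn_u: "(\<integral>\<^sup>+y\<in>S. ennreal (u n y) \<partial>M) = ennreal (LINT y:S|M. u n y)" if "S \<in> sets M" for S
      using that int_u u_nonneg by (intro nn_set_integral_eq_set_integral) auto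
    have "(\<integral>\<^sup>+y\<in>F. ennreal (u n y) \<partial>M) \<le> ennreal (measure M F / s) * ennreal (LINT y:A|M. u n y)"
      using avg s by (simp add: nn_u F ennreal_mult'[symmetric] ennreal_leI)
    also have "\<dots> \<le> ennreal (measure M F / s) * (\<integral>\<^sup>+y\<in>A. h y \<partial>M)"
      by (auto simp: nn_u[OF A(1), symmetric] min_u[symmetric] intro!: mult_left_mono nn_integral_mono mult_right_mono)
    also have "\<dots> \<le> ennreal (measure M F / s) * K"
      using K[OF A] by (rule mult_left_mono) simp
    finally show "(\<integral>\<^sup>+y\<in>F. ennreal (u n y) \<partial>M) \<le> ennreal (measure M F / s) * K" .
  qed
  finally show ?thesis .
qed

end

lemma ennroot_ennreal: "0 \<le> r \<Longrightarrow> ennroot q (ennreal r) = ennreal (r powr (1 / q))"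
  by (simp add: ennroot_def)

lemma ennroot_le_ennreal_iff:
  assumes q: "0 < q" and y: "0 \<le> y"
  shows "ennroot q J \<le> ennreal y \<longleftrightarrow> J \<le> ennreal (y powr q)"
proof (cases J rule: ennreal_cases)
  case (real r)
  have "r powr (1 / q) \<le> y \<longleftrightarrow> r \<le> y powr q"
  proof
    assume "r powr (1 / q) \<le> y"
    then have "(r powr (1 / q)) powr q \<le> y powr q"
      using q by (intro powr_mono2) auto
    then show "r \<le> y powr q"
      using q real by (simp add: powr_powr)
  next
    assume "r \<le> y powr q"
    then have "r powr (1 / q) \<le> (y powr q) powr (1 / q)"
      using q real by (intro powr_mono2) auto
    then show "r powr (1 / q) \<le> y"
      using q y by (simp add: powr_powr)
  qed
  then show ?thesis
    using real y by (simp add: ennroot_def)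
qed (simp add: ennroot_def top_unique)

definition rect_Lq_pow ::
    "'a measure \<Rightarrow> 'b measure \<Rightarrow> real \<Rightarrow> ('a \<times> 'b \<Rightarrow> real) \<Rightarrow> 'a set \<Rightarrow> 'b set \<Rightarrow> ennreal"
  where "rect_Lq_pow M N q a E F = (\<integral>\<^sup>+z. ennreal (\<bar>indicator (E \<times> F) z * a z\<bar> powr q) \<partial>(M \<Otimes>\<^sub>M N))"

lemma Lq_norm_indicator_Times:
  "Lq_norm (M \<Otimes>\<^sub>M N) q (\<lambda>z. indicator (E \<times> F) z * a z) = ennroot q (rect_Lq_pow M N q a E F)"
  by (simp add: Lq_norm_def rect_Lq_pow_def)

lemma rect_Lq_pow_mono:
  "E \<subseteq> E' \<Longrightarrow> F \<subseteq> F' \<Longrightarrow> rect_Lq_pow M N q a E F \<le> rect_Lq_pow M N q a E' F'"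
  unfolding rect_Lq_pow_def by (intro nn_integral_mono) (auto simp: indicator_def)

lemma (in pair_sigma_finite) rect_Lq_pow_space_Times:
  assumes [measurable]: "a \<in> borel_measurable (M1 \<Otimes>\<^sub>M M2)" "F \<in> sets M2"
  shows "rect_Lq_pow M1 M2 q a (space M1) F = (\<integral>\<^sup>+y\<in>F. (\<integral>\<^sup>+x. ennreal (\<bar>a (x, y)\<bar> powr q) \<partial>M1) \<partial>M2)"
proof -
  have "rect_Lq_pow M1 M2 q a (space M1) F
      = (\<integral>\<^sup>+z. indicator F (snd z) * ennreal (\<bar>a z\<bar> powr q) \<partial>(M1 \<Otimes>\<^sub>M M2))"
    unfolding rect_Lq_pow_def by (intro nn_integral_cong) (auto simp: indicator_def space_pair_measure)
  also have "\<dots> = (\<integral>\<^sup>+y. (\<integral>\<^sup>+x. indicator F y * ennreal (\<bar>a (x, y)\<bar> powr q) \<partial>M1) \<partial>M2)"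
    by (subst nn_integral_snd[symmetric]) auto
  also have "\<dots> = (\<integral>\<^sup>+y\<in>F. (\<integral>\<^sup>+x. ennreal (\<bar>a (x, y)\<bar> powr q) \<partial>M1) \<partial>M2)"
    by (intro nn_integral_cong) (auto simp: indicator_def)
  finally show ?thesis .
qed

lemma (in pair_sigma_finite) rect_Lq_pow_const_one:
  assumes "E \<in> sets M1" "F \<in> sets M2"
  shows "rect_Lq_pow M1 M2 q (\<lambda>_. 1) E F = emeasure M1 E * emeasure M2 F"
proof -
  have "rect_Lq_pow M1 M2 q (\<lambda>_. 1) E F = (\<integral>\<^sup>+z. indicator (E \<times> F) z \<partial>(M1 \<Otimes>\<^sub>M M2))"
    unfolding rect_Lq_pow_def by (intro nn_integral_cong) (auto simp: indicator_def)
  also have "\<dots> = emeasure M1 E * emeasure M2 F"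
    using assms by (simp add: M2.emeasure_pair_measure_Times)
  finally show ?thesis .
qed

definition admissible_rects :: "'a measure \<Rightarrow> 'b measure \<Rightarrow> real \<Rightarrow> real \<Rightarrow> ('a set \<times> 'b set) set"
  where "admissible_rects M N al t = {(E, F). E \<in> sets M \<and> F \<in> sets N \<and> 0 < measure M E \<and>
    measure N F powr al / t \<le> measure M E powr al}"

lemma rect_Lq_pow_le_of_norm2_le:
  assumes q: "0 < q" and x: "0 \<le> x" "norm2 M N p q t a \<le> ennreal x"
    and EF: "(E, F) \<in> admissible_rects M N (alpha_exp q p) t"
  shows "rect_Lq_pow M N q a E F \<le> ennreal ((x * measure M E powr alpha_exp q p) powr q)"
proof -
  define m where "m = measure M E"
  define R where "R = ennroot q (rect_Lq_pow M N q a E F)"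
  have m: "0 < m"
    using EF by (simp add: m_def admissible_rects_def)
  have "ennreal (m powr - alpha_exp q p) * R \<le> norm2 M N p q t a"
    unfolding norm2_def Lq_norm_indicator_Times using EF
    by (intro SUP_upper2[of "(E, F)"]) (auto simp: m_def R_def admissible_rects_def)
  then have le: "ennreal (m powr - alpha_exp q p) * R \<le> ennreal x"
    using x by simp
  have "ennreal (m powr alpha_exp q p) * ennreal (m powr - alpha_exp q p) = 1"
    using m by (simp add: ennreal_mult[symmetric] powr_minus)
  then have "R = ennreal (m powr alpha_exp q p) * (ennreal (m powr - alpha_exp q p) * R)"
    by (simp add: mult.assoc[symmetric])
  also have "\<dots> \<le> ennreal (m powr alpha_exp q p) * ennreal x"
    using le by (rule mult_left_mono) simp
  also have "\<dots> = ennreal (x * m powr alpha_exp q p)"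
    by (metis ennreal_mult' mult.commute powr_ge_zero)
  finally have "R \<le> ennreal (x * m powr alpha_exp q p)" .
  then show ?thesis
    using ennroot_le_ennreal_iff[OF q] x by (simp add: R_def m_def)
qed

lemma norm1_le_of_rect_Lq_pow_le:
  assumes q: "0 < q" and t: "0 < t" and c: "0 \<le> c"
    and bound: "\<And>E F. E \<in> sets M \<Longrightarrow> F \<in> sets N \<Longrightarrow> 0 < measure M E \<Longrightarrow> 0 < measure N F \<Longrightarrow>
      rect_Lq_pow M N q a E F
        \<le> ennreal ((c * max (measure M E powr alpha_exp q p) (measure N F powr alpha_exp q p / t)) powr q)"
  shows "norm1 M N p q t a \<le> ennreal c"
proof -
  have "ennreal (1 / m) * ennroot q (rect_Lq_pow M N q a E F) \<le> ennreal c"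
    if EF: "E \<in> sets M" "F \<in> sets N" "0 < measure M E" "0 < measure N F"
      and m_def: "m = max (measure M E powr alpha_exp q p) (measure N F powr alpha_exp q p / t)" for E F m
  proof -
    have m: "0 < m"
      using EF t by (simp add: m_def less_max_iff_disj)
    have "ennroot q (rect_Lq_pow M N q a E F) \<le> ennreal (c * m)"
      using bound[OF EF] ennroot_le_ennreal_iff[OF q, of "c * m"] c m by (simp add: m_def)
    then have "ennreal (1 / m) * ennroot q (rect_Lq_pow M N q a E F) \<le> ennreal (1 / m) * ennreal (c * m)"
      by (rule mult_left_mono) simp
    also have "\<dots> = ennreal c"
      using m c by (simp add: ennreal_mult[symmetric])
    finally show ?thesis .
  qed
  then show ?thesis
    unfolding norm1_def Lq_norm_indicator_Times by (intro SUP_least) auto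
qed

lemma alpha_exp_pos: "0 < q \<Longrightarrow> ereal q < p \<Longrightarrow> 0 < alpha_exp q p"
  by (cases p) (auto simp: alpha_exp_def field_simps)

lemma alpha_exp_mult_le_1: "0 < q \<Longrightarrow> ereal q < p \<Longrightarrow> alpha_exp q p * q \<le> 1"
  by (cases p) (auto simp: alpha_exp_def field_simps)

lemma alpha_exp_exponent:
  "0 < q \<Longrightarrow> ereal q < p \<Longrightarrow>
    1 - 1 / (alpha_exp q p * q) = (if p = \<infinity> then 0 else - q / (real_of_ereal p - q))"
  by (cases p) (auto simp: alpha_exp_def field_simps)

lemma admissible_const_one_le:
  fixes m n t al q :: real
  assumes m: "0 < m" "m \<le> 1" and n: "0 \<le> n" and t: "0 < t" and al: "0 < al" "al * q \<le> 1" and q: "0 < q"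
    and adm: "n powr al / t \<le> m powr al"
  shows "m powr - al * (m * n) powr (1 / q) \<le> t powr (1 / (al * q))"
proof -
  have "n powr al \<le> t * m powr al"
    using adm t by (simp add: field_simps)
  then have "(n powr al) powr (1 / al) \<le> (t * m powr al) powr (1 / al)"
    using al n by (intro powr_mono2) auto
  then have "n \<le> t powr (1 / al) * m"
    using al n m t by (simp add: powr_powr powr_mult)
  then have "(m * n) powr (1 / q) \<le> (m * (t powr (1 / al) * m)) powr (1 / q)"
    using m n q by (intro powr_mono2 mult_left_mono) auto
  also have "\<dots> = m powr (2 / q) * t powr (1 / (al * q))"
    using m t by (simp add: powr_mult powr_powr powr_add[symmetric])
  finally have "m powr - al * (m * n) powr (1 / q) \<le> m powr - al * (m powr (2 / q) * t powr (1 / (al * q)))"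
    by (rule mult_left_mono) simp
  also have "\<dots> = m powr (- al + 2 / q) * t powr (1 / (al * q))"
    by (simp only: powr_add mult.assoc)
  also have "\<dots> \<le> t powr (1 / (al * q))"
    using m al q by (intro mult_left_le_one_le powr_le1) (auto simp: field_simps)
  finally show ?thesis .
qed

lemma large_rect_factor_le:
  fixes t n al q x :: real
  assumes t: "0 < t" and n: "0 < n" "n \<le> 1" and al: "0 < al" "al * q \<le> 1" and q: "0 < q" and x: "0 \<le> x"
  shows "n / t powr (1 / al) * x powr q \<le> (t powr (1 - 1 / (al * q)) * x * (n powr al / t)) powr q"
proof -
  have "(t powr (1 - 1 / (al * q)) * x * (n powr al / t)) powr q
      = t powr ((1 - 1 / (al * q)) * q) * x powr q * (n powr (al * q) / t powr q)"
    using t n x by (simp add: powr_mult powr_divide powr_powr)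
  also have "(1 - 1 / (al * q)) * q = q - 1 / al"
    using al q by (simp add: field_simps)
  also have "t powr (q - 1 / al) * x powr q * (n powr (al * q) / t powr q)
      = n powr (al * q) / t powr (1 / al) * x powr q"
    using t by (simp add: powr_diff field_simps)
  finally have eq: "(t powr (1 - 1 / (al * q)) * x * (n powr al / t)) powr q
      = n powr (al * q) / t powr (1 / al) * x powr q" .
  have "n \<le> n powr (al * q)"
    using powr_mono'[of "al * q" 1 n] al n by simp
  then show ?thesis
    unfolding eq using t by (intro mult_right_mono divide_right_mono) auto
qed

locale nonatomic_pair_prob_space = pair_prob_space M1 M2
  for M1 :: "'a measure" and M2 :: "'b measure" +
  assumes nonatomic_M1: "nonatomic M1" and nonatomic_M2: "nonatomic M2"
begin

context
  fixes q al t :: real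
  assumes q: "0 < q" and al: "0 < al" "al * q \<le> 1" and t: "0 < t" "t \<le> 1"
begin

lemma rect_Lq_pow_le_enlarged:
  assumes dom: "\<And>E F. (E, F) \<in> admissible_rects M1 M2 al t \<Longrightarrow>
      rect_Lq_pow M1 M2 q a E F \<le> ennreal ((x * measure M1 E powr al) powr q)"
    and E: "E \<in> sets M1" "0 < measure M1 E" and F: "F \<in> sets M2"
    and small: "measure M2 F powr al / t \<le> 1"
  shows "rect_Lq_pow M1 M2 q a E F \<le> ennreal ((x * max (measure M1 E powr al) (measure M2 F powr al / t)) powr q)"
proof -
  define b where "b = max (measure M1 E powr al) (measure M2 F powr al / t)"
  have b: "0 < b" "b \<le> 1"
    using E small al M1.prob_le_1[of E] by (auto simp: b_def less_max_iff_disj powr_le1)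
  have "measure M1 E = (measure M1 E powr al) powr (1 / al)"
    using E al by (simp add: powr_powr)
  also have "\<dots> \<le> b powr (1 / al)"
    using E al by (intro powr_mono2) (auto simp: b_def)
  finally have E_le: "measure M1 E \<le> b powr (1 / al)" .
  have compl: "measure M1 (space M1 - E) = 1 - measure M1 E"
    using E by (simp add: M1.prob_compl)
  have "b powr (1 / al) \<le> 1"
    using b al by (intro powr_le1) auto
  then obtain B where B: "B \<in> sets M1" "B \<subseteq> space M1 - E" "measure M1 B = b powr (1 / al) - measure M1 E"
    using E_le compl
    by (rule_tac M1.nonatomic_exists_subset_measure[OF nonatomic_M1 sets.compl_sets[OF E(1)],
        of "b powr (1 / al) - measure M1 E"]) auto
  have E': "measure M1 (E \<union> B) = b powr (1 / al)"
    using B E by (subst M1.finite_measure_Union) auto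
  then have "(E \<union> B, F) \<in> admissible_rects M1 M2 al t"
    using B E F b al by (auto simp: admissible_rects_def powr_powr b_def)
  then have "rect_Lq_pow M1 M2 q a (E \<union> B) F \<le> ennreal ((x * b) powr q)"
    using dom E' b al by (force simp: powr_powr)
  moreover have "rect_Lq_pow M1 M2 q a E F \<le> rect_Lq_pow M1 M2 q a (E \<union> B) F"
    by (rule rect_Lq_pow_mono) auto
  ultimately show ?thesis
    by (simp add: b_def)
qed

lemma rect_Lq_pow_le_averaged:
  assumes a[measurable]: "a \<in> borel_measurable (M1 \<Otimes>\<^sub>M M2)"
    and dom: "\<And>E F. (E, F) \<in> admissible_rects M1 M2 al t \<Longrightarrow>
      rect_Lq_pow M1 M2 q a E F \<le> ennreal ((x * measure M1 E powr al) powr q)"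
    and E: "E \<in> sets M1" and F[measurable]: "F \<in> sets M2"
    and large: "1 \<le> measure M2 F powr al / t"
  shows "rect_Lq_pow M1 M2 q a E F \<le> ennreal (measure M2 F / t powr (1 / al)) * ennreal (x powr q)"
proof -
  define s where "s = t powr (1 / al)"
  have s: "0 < s" "s powr al = t"
    using t al by (simp_all add: s_def powr_powr)
  have "s \<le> (measure M2 F powr al) powr (1 / al)"
    unfolding s_def using t large al by (intro powr_mono2) (auto simp: field_simps)
  then have s_le: "s \<le> measure M2 F"
    using al by (simp add: powr_powr)
  have "rect_Lq_pow M1 M2 q a E F \<le> rect_Lq_pow M1 M2 q a (space M1) F"
    using sets.sets_into_space[OF E] by (rule rect_Lq_pow_mono) simp
  also have "\<dots> = (\<integral>\<^sup>+y\<in>F. (\<integral>\<^sup>+x. ennreal (\<bar>a (x, y)\<bar> powr q) \<partial>M1) \<partial>M2)"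
    by (rule rect_Lq_pow_space_Times) measurable
  also have "\<dots> \<le> ennreal (measure M2 F / s) * ennreal (x powr q)"
  proof (rule M2.nonatomic_set_nn_integral_average[OF nonatomic_M2 _ F s(1) s_le])
    fix A assume A: "A \<in> sets M2" "A \<subseteq> F" "measure M2 A = s"
    then have "(space M1, A) \<in> admissible_rects M1 M2 al t"
      using s by (simp add: admissible_rects_def M1.prob_space)
    then have "rect_Lq_pow M1 M2 q a (space M1) A \<le> ennreal (x powr q)"
      using dom by (fastforce simp: M1.prob_space)
    then show "(\<integral>\<^sup>+y\<in>A. (\<integral>\<^sup>+x. ennreal (\<bar>a (x, y)\<bar> powr q) \<partial>M1) \<partial>M2) \<le> ennreal (x powr q)"
      using A(1) by (simp add: rect_Lq_pow_space_Times)
  qed measurable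
  finally show ?thesis
    by (simp add: s_def)
qed

lemma rect_Lq_pow_le_max:
  assumes a: "a \<in> borel_measurable (M1 \<Otimes>\<^sub>M M2)" and x: "0 \<le> x"
    and dom: "\<And>E F. (E, F) \<in> admissible_rects M1 M2 al t \<Longrightarrow>
      rect_Lq_pow M1 M2 q a E F \<le> ennreal ((x * measure M1 E powr al) powr q)"
    and E: "E \<in> sets M1" "0 < measure M1 E" and F: "F \<in> sets M2" "0 < measure M2 F"
  shows "rect_Lq_pow M1 M2 q a E F
    \<le> ennreal ((t powr (1 - 1 / (al * q)) * x * max (measure M1 E powr al) (measure M2 F powr al / t)) powr q)"
proof -
  define C where "C = t powr (1 - 1 / (al * q))"
  define b where "b = max (measure M1 E powr al) (measure M2 F powr al / t)"
  have "t powr 0 \<le> C"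
    unfolding C_def using t al q by (intro powr_mono') (auto simp: field_simps)
  then have C: "1 \<le> C"
    using t by simp
  show ?thesis
  proof (cases "measure M2 F powr al / t \<le> 1")
    case True
    have "rect_Lq_pow M1 M2 q a E F \<le> ennreal ((x * b) powr q)"
      unfolding b_def by (rule rect_Lq_pow_le_enlarged[OF dom E F(1) True])
    also have "\<dots> \<le> ennreal ((C * x * b) powr q)"
    proof -
      have "0 \<le> x * b"
        using x by (intro mult_nonneg_nonneg) (auto simp: b_def le_max_iff_disj)
      then have "x * b \<le> C * x * b"
        using mult_right_mono[OF C, of "x * b"] by (simp add: mult.assoc)
      then show ?thesis
        using \<open>0 \<le> x * b\<close> q by (intro ennreal_leI powr_mono2) auto
    qed
    finally show ?thesis
      by (simp add: C_def b_def)
  next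
    case False
    then have large: "1 \<le> measure M2 F powr al / t"
      by linarith
    have "measure M1 E powr al \<le> 1"
      using al M1.prob_le_1[of E] by (simp add: powr_le1)
    with False have b: "b = measure M2 F powr al / t"
      by (simp add: b_def)
    have "rect_Lq_pow M1 M2 q a E F \<le> ennreal (measure M2 F / t powr (1 / al)) * ennreal (x powr q)"
      by (rule rect_Lq_pow_le_averaged[OF a dom E(1) F(1) large])
    also have "\<dots> = ennreal (measure M2 F / t powr (1 / al) * x powr q)"
      by (rule ennreal_mult'[symmetric]) simp
    also have "\<dots> \<le> ennreal ((C * x * b) powr q)"
      unfolding b C_def using t F(2) M2.prob_le_1[of F] al q x by (intro ennreal_leI large_rect_factor_le)
    finally show ?thesis
      by (simp add: C_def b_def)
  qed
qed

end

lemma norm1_le_mult_norm2: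
  assumes q: "0 < q" and p: "ereal q < p" and t: "0 < t" "t \<le> 1"
    and a: "a \<in> borel_measurable (M1 \<Otimes>\<^sub>M M2)"
  shows "norm1 M1 M2 p q t a \<le> ennreal (t powr (1 - 1 / (alpha_exp q p * q))) * norm2 M1 M2 p q t a"
proof (cases "norm2 M1 M2 p q t a")
  case (real x)
  define C where "C = t powr (1 - 1 / (alpha_exp q p * q))"
  have al: "0 < alpha_exp q p" "alpha_exp q p * q \<le> 1"
    using alpha_exp_pos alpha_exp_mult_le_1 q p by auto
  have "norm1 M1 M2 p q t a \<le> ennreal (C * x)"
  proof (rule norm1_le_of_rect_Lq_pow_le[OF q t(1)])
    show "0 \<le> C * x"
      using real by (simp add: C_def)
    fix E F assume EF: "E \<in> sets M1" "F \<in> sets M2" "0 < measure M1 E" "0 < measure M2 F"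
    have "rect_Lq_pow M1 M2 q a E F \<le> ennreal ((x * measure M1 E powr alpha_exp q p) powr q)"
      if "(E, F) \<in> admissible_rects M1 M2 (alpha_exp q p) t" for E F
      by (rule rect_Lq_pow_le_of_norm2_le[OF q real(1) real(2)[THEN eq_refl] that])
    then show "rect_Lq_pow M1 M2 q a E F \<le> ennreal ((C * x * max (measure M1 E powr alpha_exp q p)
        (measure M2 F powr alpha_exp q p / t)) powr q)"
      unfolding C_def using EF by (intro rect_Lq_pow_le_max[OF q al t a real(1)])
  qed
  then show ?thesis
    using real t by (simp add: C_def ennreal_mult)
qed (use t in \<open>simp add: ennreal_mult_top\<close>)

lemma norm2_const_one_le:
  assumes q: "0 < q" and p: "ereal q < p" and t: "0 < t"
  shows "norm2 M1 M2 p q t (\<lambda>_. 1) \<le> ennreal (t powr (1 / (alpha_exp q p * q)))"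
proof -
  have "ennreal (measure M1 E powr - alpha_exp q p) * ennroot q (rect_Lq_pow M1 M2 q (\<lambda>_. 1) E F)
      \<le> ennreal (t powr (1 / (alpha_exp q p * q)))"
    if "(E, F) \<in> admissible_rects M1 M2 (alpha_exp q p) t" for E F
  proof -
    have EF: "E \<in> sets M1" "F \<in> sets M2" "0 < measure M1 E"
      "measure M2 F powr alpha_exp q p / t \<le> measure M1 E powr alpha_exp q p"
      using that by (auto simp: admissible_rects_def)
    have "ennroot q (rect_Lq_pow M1 M2 q (\<lambda>_. 1) E F) = ennreal ((measure M1 E * measure M2 F) powr (1 / q))"
      using EF by (simp add: rect_Lq_pow_const_one M1.emeasure_eq_measure M2.emeasure_eq_measure
          ennreal_mult[symmetric] ennroot_ennreal)
    moreover have "measure M1 E powr - alpha_exp q p * (measure M1 E * measure M2 F) powr (1 / q)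
        \<le> t powr (1 / (alpha_exp q p * q))"
      using EF t q alpha_exp_pos[OF q p] alpha_exp_mult_le_1[OF q p] M1.prob_le_1[of E]
      by (intro admissible_const_one_le) auto
    ultimately show ?thesis
      by (simp add: ennreal_mult[symmetric] ennreal_leI)
  qed
  then show ?thesis
    unfolding norm2_def Lq_norm_indicator_Times admissible_rects_def[symmetric]
    by (intro SUP_least) auto
qed

lemma norm2_const_one_pos:
  assumes q: "0 < q" and p: "ereal q < p" and t: "0 < t" "t \<le> 1"
  shows "0 < norm2 M1 M2 p q t (\<lambda>_. 1)"
proof -
  define s where "s = t powr (1 / alpha_exp q p)"
  have s: "0 < s" "s \<le> 1" "s powr alpha_exp q p = t"
    using t alpha_exp_pos[OF q p] by (auto simp: s_def powr_powr intro: powr_le1)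
  obtain A where A: "A \<in> sets M2" "measure M2 A = s"
    using s M2.prob_space by (rule_tac M2.nonatomic_exists_subset_measure[OF nonatomic_M2 sets.top, of s]) auto
  have "0 < ennreal (measure M1 (space M1) powr - alpha_exp q p) * ennroot q (rect_Lq_pow M1 M2 q (\<lambda>_. 1) (space M1) A)"
    using A s by (simp add: rect_Lq_pow_const_one M1.emeasure_space_1 M1.prob_space M2.emeasure_eq_measure
        ennroot_ennreal)
  also have "\<dots> \<le> norm2 M1 M2 p q t (\<lambda>_. 1)"
    unfolding norm2_def Lq_norm_indicator_Times using A s t
    by (intro SUP_upper2[of "(space M1, A)"]) (auto simp: M1.prob_space)
  finally show ?thesis .
qed

lemma norm1_const_one_ge:
  assumes t: "0 < t" "t \<le> 1"
  shows "ennreal t \<le> norm1 M1 M2 p q t (\<lambda>_. 1)"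
proof -
  have "ennreal t = ennreal (1 / max (measure M1 (space M1) powr alpha_exp q p) (measure M2 (space M2) powr alpha_exp q p / t))
      * ennroot q (rect_Lq_pow M1 M2 q (\<lambda>_. 1) (space M1) (space M2))"
    using t by (simp add: rect_Lq_pow_const_one M1.emeasure_space_1 M2.emeasure_space_1 M1.prob_space
        M2.prob_space ennroot_def max_def)
  also have "\<dots> \<le> norm1 M1 M2 p q t (\<lambda>_. 1)"
    unfolding norm1_def Lq_norm_indicator_Times
    by (intro SUP_upper2[of "(space M1, space M2)"]) (auto simp: M1.prob_space M2.prob_space)
  finally show ?thesis .
qed

lemma SUP_norm1_divide_norm2:
  assumes q: "0 < q" and p: "ereal q < p" and t: "0 < t" "t \<le> 1"
  shows "(SUP a \<in> {a. integrable (M1 \<Otimes>\<^sub>M M2) a \<and> 0 < norm2 M1 M2 p q t a \<and> norm2 M1 M2 p q t a < \<infinity>}.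
      norm1 M1 M2 p q t a / norm2 M1 M2 p q t a) = ennreal (t powr (1 - 1 / (alpha_exp q p * q)))"
    (is "(SUP a \<in> ?D. ?ratio a) = ennreal ?C")
proof (rule antisym)
  show "(SUP a \<in> ?D. ?ratio a) \<le> ennreal ?C"
  proof (rule SUP_least)
    fix a assume "a \<in> ?D"
    then show "?ratio a \<le> ennreal ?C"
      using norm1_le_mult_norm2[OF q p t borel_measurable_integrable]
      by (intro divide_le_posI_ennreal) (auto simp: mult.commute)
  qed
  have one_pos: "0 < norm2 M1 M2 p q t (\<lambda>_. 1)"
    by (rule norm2_const_one_pos[OF q p t])
  have one_le: "norm2 M1 M2 p q t (\<lambda>_. 1) \<le> ennreal (t powr (1 / (alpha_exp q p * q)))"
    by (rule norm2_const_one_le[OF q p t(1)])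
  have "ennreal ?C * norm2 M1 M2 p q t (\<lambda>_. 1) \<le> ennreal ?C * ennreal (t powr (1 / (alpha_exp q p * q)))"
    using one_le by (rule mult_left_mono) simp
  also have "\<dots> = ennreal t"
    using t by (simp add: ennreal_mult[symmetric] powr_add[symmetric])
  also have "\<dots> \<le> norm1 M1 M2 p q t (\<lambda>_. 1)"
    by (rule norm1_const_one_ge[OF t])
  finally have "ennreal ?C \<le> ?ratio (\<lambda>_. 1)"
    using one_pos one_le by (metis divide_less_ennreal ennreal_less_top le_less_trans not_le order.strict_iff_not)
  moreover have "(\<lambda>_. 1) \<in> ?D"
    using one_pos one_le by (auto simp: le_less_trans)
  ultimately show "ennreal ?C \<le> (SUP a \<in> ?D. ?ratio a)"
    by (blast intro: SUP_upper2)
qed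

end

theorem proposition3p4:
  fixes M :: "'a measure" and N :: "'b measure" and p :: ereal and q t :: real
  assumes "nonatomic M" and "nonatomic N"
    and "emeasure M (space M) = 1" and "emeasure N (space N) = 1"
    and "1 \<le> q" and "ereal q < p"
    and "0 < t" and "t \<le> 1"
  shows "(SUP a \<in> {a. integrable (M \<Otimes>\<^sub>M N) a \<and> 0 < norm2 M N p q t a \<and> norm2 M N p q t a < \<infinity>}.
            norm1 M N p q t a / norm2 M N p q t a)
         = ennreal (if p = \<infinity> then 1 else t powr (- q / (real_of_ereal p - q)))"
proof -
  interpret M: prob_space M by (rule prob_spaceI) fact
  interpret N: prob_space N by (rule prob_spaceI) fact
  interpret nonatomic_pair_prob_space M N
    by unfold_locales fact+
  have q: "0 < q"
    using assms(5) by simp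
  have "(if p = \<infinity> then 1 else t powr (- q / (real_of_ereal p - q))) = t powr (1 - 1 / (alpha_exp q p * q))"
    using alpha_exp_exponent[OF q assms(6)] assms(7) by simp
  with SUP_norm1_divide_norm2[OF q assms(6-8)] show ?thesis
    by simp
qed

end
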